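(* Let $\{X^{(n)}(t),t\ge0\}$, $n\in\mathbb N$, be a family of Markov processes on $V_n$ with generators $L_n$, and let $\{\eta(t),t\ge0\}$ be a Markov configuration process on $\Omega$ with generator $\mathcal L$ satisfying $L_n U_\phi=U_\phi\mathcal L$ on functions $\Omega_n\to\mathbb R$ for every $n$. Then the following are equivalent: (a) for every $n\in\mathbb N$ and every permutation-invariant $g:V_{n-1}\to\mathbb R$, $L_n\Pi^{(n)}g=\Pi^{(n)}L_{n-1}g$; (b) $[\mathcal L,\mathcal A]=0$.
   Context: $V$ is a countable set, $\Lambda\subseteq\mathbb N_0$ the single-site state space. For $\mathbf x\in V^n$, $\phi(\mathbf x):=\sum_{i=1}^n\delta_{x_i}$. $\Omega_n:=\{\eta\in\Lambda^V:\sum_x\eta_x=n\}$, $\Omega=\bigcup_n\Omega_n$, $V_n:=\{\mathbf x\in V^n:\phi(\mathbf x)\in\Omega_n\}$, $U_\phi f:=f\circ\phi$. A function $g$ of $n$ variables is permutation-invariant if $g(x_1,\dots,x_n)=g(x_{\sigma(1)},\dots,x_{\sigma(n)})$ for all permutations $\sigma$. For $g$ a function of $n-1$ variables, $(\Pi^{(n)}g)(x_1,\dots,x_n):=\sum_{i=1}^n g(x_1,\dots,x_{i-1},x_{i+1},\dots,x_n)$. The annihilation operator acts on $f:\Omega\to\mathbb R$ by $\mathcal Af(\eta)=\sum_{x\in V}a_xf(\eta)$, where $a_xf(\eta)=\eta_xf(\eta-\delta_x)$ if $\eta_x\ge1$ and $0$ if $\eta_x=0$. $[\cdot,\cdot]$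 denotes the commutator. *)

theory Defs
  imports Complex_Main "HOL-Combinatorics.Permutations" "HOL-Library.Countable"
begin

text \<open>Configurations are functions 'v => nat; functions on lists of sites model functions on V^n.\<close>

definition phi :: "'v list \<Rightarrow> ('v \<Rightarrow> nat)" where
  "phi xs = (\<lambda>y. count_list xs y)"

definition Omega :: "nat set \<Rightarrow> ('v \<Rightarrow> nat) set" where
  "Omega Lam = {\<eta>. finite {x. \<eta> x \<noteq> 0} \<and> (\<forall>x. \<eta> x \<in> Lam)}"

definition Omega_n :: "nat set \<Rightarrow> nat \<Rightarrow> ('v \<Rightarrow> nat) set" where
  "Omega_n Lam n = {\<eta> \<in> Omega Lam. (\<Sum>x\<in>{x. \<eta> x \<noteq> 0}. \<eta> x) = n}"

definition V_n :: "nat set \<Rightarrow> nat \<Rightarrow> 'v list set" where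
  "V_n Lam n = {xs. length xs = n \<and> phi xs \<in> Omega_n Lam n}"

definition U_phi :: "(('v \<Rightarrow> nat) \<Rightarrow> real) \<Rightarrow> ('v list \<Rightarrow> real)" where
  "U_phi f = f \<circ> phi"

definition del_nth :: "nat \<Rightarrow> 'a list \<Rightarrow> 'a list" where
  "del_nth i xs = take i xs @ drop (Suc i) xs"

definition Pi_op :: "nat \<Rightarrow> ('v list \<Rightarrow> real) \<Rightarrow> ('v list \<Rightarrow> real)" where
  "Pi_op n g = (\<lambda>xs. \<Sum>i<n. g (del_nth i xs))"

definition perm_invariant_on :: "'v list set \<Rightarrow> ('v list \<Rightarrow> real) \<Rightarrow> bool" where
  "perm_invariant_on S g \<longleftrightarrow>
     (\<forall>xs\<in>S. \<forall>\<sigma>. \<sigma> permutes {..<length xs} \<longrightarrow>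
        g (map (\<lambda>i. xs ! \<sigma> i) [0..<length xs]) = g xs)"

definition annih :: "(('v \<Rightarrow> nat) \<Rightarrow> real) \<Rightarrow> (('v \<Rightarrow> nat) \<Rightarrow> real)" where
  "annih f = (\<lambda>\<eta>. \<Sum>x\<in>{x. \<eta> x \<noteq> 0}. real (\<eta> x) * f (\<eta>(x := \<eta> x - 1)))"

text \<open>A Markov generator on a countable state space S, viewed abstractly: an operator
  on real functions on S (its value on S depends only on the argument restricted to S),
  linear, and annihilating constants.\<close>
definition markov_generator_on :: "'s set \<Rightarrow> (('s \<Rightarrow> real) \<Rightarrow> ('s \<Rightarrow> real)) \<Rightarrow> bool" where
  "markov_generator_on S L \<longleftrightarrow>
     (\<forall>f g. (\<forall>y\<in>S. f y = g y) \<longrightarrow> (\<forall>x\<in>S. L f x = L g x)) \<and>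
     (\<forall>f g a b. \<forall>x\<in>S. L (\<lambda>y. a * f y + b * g y) x = a * L f x + b * L g x) \<and>
     (\<forall>x\<in>S. L (\<lambda>_. 1) x = 0)"

end

theory Submission
  imports Defs
begin

text \<open>Deleting the \<open>i\<close>-th particle of \<open>xs\<close> and summing over \<open>i\<close> removes one particle
  from each occupied site \<open>x\<close> exactly \<open>\<eta>\<^sub>x\<close> times, where \<open>\<eta> = \<phi>(xs)\<close>; hence
  \<open>\<Pi> U\<^sub>\<phi> f = U\<^sub>\<phi> \<A> f\<close> on lists of length \<open>n\<close>. Combined with the intertwining
  \<open>L\<^sub>n U\<^sub>\<phi> = U\<^sub>\<phi> \<L>\<close> this gives \<open>L\<^sub>n \<Pi> U\<^sub>\<phi> f = U\<^sub>\<phi> \<L> \<A> f\<close> and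
  \<open>\<Pi> L\<^sub>n\<^sub>-\<^sub>1 U\<^sub>\<phi> f = U\<^sub>\<phi> \<A> \<L> f\<close>, so condition (a) for \<open>g = U\<^sub>\<phi> f\<close> says exactly
  that \<open>[\<L>, \<A>] f\<close> vanishes at \<open>\<phi>(xs)\<close>. The two conditions then coincide because
  \<open>\<phi>\<close> maps \<open>V\<^sub>n\<close> onto \<open>\<Omega>\<^sub>n\<close> and every permutation-invariant \<open>g\<close> agrees with some
  \<open>U\<^sub>\<phi> f\<close> on \<open>V\<^sub>n\<^sub>-\<^sub>1\<close>.\<close>

lemma phi_eq_count_mset: "phi xs = count (mset xs)"
  by (simp add: phi_def fun_eq_iff count_mset)

lemma phi_nonzero_eq_set: "{x. phi xs x \<noteq> 0} = set xs"
  by (auto simp: phi_def count_list_0_iff)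

lemma V_n_iff: "xs \<in> V_n Lam n \<longleftrightarrow> length xs = n \<and> (\<forall>x. count_list xs x \<in> Lam)"
proof -
  have "(\<Sum>x\<in>{x. phi xs x \<noteq> 0}. phi xs x) = length xs"
    unfolding phi_nonzero_eq_set by (simp add: phi_def sum_count_set)
  then show ?thesis
    unfolding V_n_def Omega_n_def Omega_def using phi_nonzero_eq_set[of xs]
    by (auto simp: phi_def)
qed

lemma phi_in_Omega: "xs \<in> V_n Lam n \<Longrightarrow> phi xs \<in> Omega Lam"
  by (simp add: V_n_def Omega_n_def)

lemma Omega_obtain_phi:
  assumes "\<eta> \<in> Omega Lam"
  obtains n xs where "xs \<in> V_n Lam n" and "phi xs = \<eta>"
proof -
  have "finite {x. 0 < \<eta> x}" and Lam: "\<forall>x. \<eta> x \<in> Lam"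
    using assms by (auto simp: Omega_def)
  then have "count (Abs_multiset \<eta>) = \<eta>"
    by (simp add: count_Abs_multiset)
  moreover obtain xs where "mset xs = Abs_multiset \<eta>"
    using ex_mset by blast
  ultimately have "phi xs = \<eta>"
    by (simp add: phi_eq_count_mset)
  with Lam have "xs \<in> V_n Lam (length xs)"
    by (auto simp: V_n_iff phi_def)
  with \<open>phi xs = \<eta>\<close> show ?thesis
    using that by blast
qed

lemma length_del_nth: "i < length xs \<Longrightarrow> length (del_nth i xs) = length xs - 1"
  by (simp add: del_nth_def)

lemma mset_del_nth: "i < length xs \<Longrightarrow> mset (del_nth i xs) = mset xs - {#xs ! i#}"
  by (subst (2) id_take_nth_drop[of i xs]) (simp_all add: del_nth_def)

lemma phi_del_nth:
  "i < length xs \<Longrightarrow> phi (del_nth i xs) = (phi xs)(xs ! i := phi xs (xs ! i) - 1)"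
  by (auto simp: phi_eq_count_mset mset_del_nth fun_eq_iff)

lemma del_nth_in_V_n:
  assumes down: "\<forall>k\<in>Lam. \<forall>j\<le>k. j \<in> Lam" and xs: "xs \<in> V_n Lam n" and "i < n"
  shows "del_nth i xs \<in> V_n Lam (n - 1)"
proof -
  have len: "length xs = n" and "\<forall>x. count_list xs x \<in> Lam"
    using xs by (auto simp: V_n_iff)
  moreover have "count_list (del_nth i xs) x \<le> count_list xs x" for x
    using phi_del_nth[of i xs] \<open>i < n\<close> len by (simp add: phi_def fun_eq_iff)
  ultimately show ?thesis
    using down \<open>i < n\<close> by (auto simp: V_n_iff length_del_nth)
qed

lemma sum_list_map_eq_sum_of_nat_count:
  "sum_list (map (H :: 'a \<Rightarrow> 'b :: comm_semiring_1) xs)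
     = (\<Sum>x\<in>set xs. of_nat (count_list xs x) * H x)"
proof (induction xs)
  case (Cons a xs)
  have "(\<Sum>x\<in>set (a # xs). of_nat (count_list (a # xs) x) * H x)
      = (\<Sum>x\<in>insert a (set xs). of_nat (count_list xs x) * H x + (if x = a then H x else 0))"
    by (intro sum.cong) (auto simp: algebra_simps)
  also have "\<dots> = H a + (\<Sum>x\<in>set xs. of_nat (count_list xs x) * H x)"
    by (simp add: sum.distrib sum.insert_if count_list_0_iff add.commute)
  finally show ?case
    using Cons by simp
qed simp

lemma Pi_op_U_phi:
  assumes "length xs = n"
  shows "Pi_op n (U_phi f) xs = U_phi (annih f) xs"
proof -
  define H where "H x = f ((phi xs)(x := phi xs x - 1))" for x
  have "Pi_op n (U_phi f) xs = (\<Sum>i<length xs. H (xs ! i))"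
    using assms by (simp add: Pi_op_def U_phi_def H_def phi_del_nth)
  also have "\<dots> = sum_list (map H xs)"
    by (simp add: sum_list_sum_nth atLeast0LessThan)
  also have "\<dots> = (\<Sum>x\<in>set xs. real (count_list xs x) * H x)"
    by (rule sum_list_map_eq_sum_of_nat_count)
  also have "\<dots> = U_phi (annih f) xs"
    unfolding U_phi_def comp_def annih_def phi_nonzero_eq_set H_def by (simp add: phi_def)
  finally show ?thesis .
qed

lemma Pi_op_cong:
  assumes "\<forall>k\<in>Lam. \<forall>j\<le>k. j \<in> Lam" and "xs \<in> V_n Lam n"
    and "\<And>ys. ys \<in> V_n Lam (n - 1) \<Longrightarrow> g ys = h ys"
  shows "Pi_op n g xs = Pi_op n h xs"
proof -
  have "g (del_nth i xs) = h (del_nth i xs)" if "i < n" for i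
    using assms(3) del_nth_in_V_n[OF assms(1,2) that] by blast
  then show ?thesis
    unfolding Pi_op_def by simp
qed

lemma perm_invariant_on_U_phi: "perm_invariant_on S (U_phi f)"
  unfolding perm_invariant_on_def
proof (intro ballI allI impI)
  fix ys :: "'a list" and \<sigma>
  assume "\<sigma> permutes {..<length ys}"
  then have "mset (permute_list \<sigma> ys) = mset ys"
    by simp
  then show "U_phi f (map (\<lambda>i. ys ! \<sigma> i) [0..<length ys]) = U_phi f ys"
    by (simp add: U_phi_def phi_eq_count_mset permute_list_def)
qed

lemma perm_invariant_on_obtain_U_phi:
  assumes inv: "perm_invariant_on S g"
  obtains f where "\<And>ys. ys \<in> S \<Longrightarrow> g ys = U_phi f ys"
proof
  define f where "f \<eta> = g (SOME ys. ys \<in> S \<and> phi ys = \<eta>)" for \<eta>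
  fix ys assume ys: "ys \<in> S"
  define zs where "zs = (SOME zs. zs \<in> S \<and> phi zs = phi ys)"
  have "zs \<in> S \<and> phi zs = phi ys"
    unfolding zs_def by (rule someI[of _ ys]) (use ys in simp)
  then have "mset zs = mset ys"
    by (metis phi_eq_count_mset multiset_eqI)
  then obtain p where p: "p permutes {..<length ys}" "permute_list p ys = zs"
    by (rule mset_eq_permutation)
  have "g (permute_list p ys) = g ys"
    using inv ys p(1) unfolding perm_invariant_on_def permute_list_def by blast
  with p(2) show "g ys = U_phi f ys"
    by (simp add: U_phi_def f_def zs_def)
qed

lemma markov_generator_on_cong:
  "markov_generator_on S L \<Longrightarrow> (\<And>y. y \<in> S \<Longrightarrow> f y = g y) \<Longrightarrow> x \<in> S \<Longrightarrow> L f x = L g x"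
  unfolding markov_generator_on_def by blast

lemma markov_generator_on_zero:
  assumes "markov_generator_on S L" and "x \<in> S"
  shows "L (\<lambda>_. 0) x = 0"
proof -
  have "\<forall>f g a b. \<forall>x\<in>S. L (\<lambda>y. a * f y + b * g y) x = a * L f x + b * L g x"
    using assms(1) unfolding markov_generator_on_def by blast
  from this[rule_format, where f="\<lambda>_. 0" and g="\<lambda>_. 0" and a=0 and b=0, OF assms(2)] show ?thesis
    by simp
qed

locale intertwined_generators =
  fixes Lam :: "nat set"
    and Ln :: "nat \<Rightarrow> ('v list \<Rightarrow> real) \<Rightarrow> ('v list \<Rightarrow> real)"
    and L :: "(('v \<Rightarrow> nat) \<Rightarrow> real) \<Rightarrow> (('v \<Rightarrow> nat) \<Rightarrow> real)"
  assumes Lam_down: "\<forall>k\<in>Lam. \<forall>j\<le>k. j \<in> Lam"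
    and gen_n: "\<forall>n. markov_generator_on (V_n Lam n) (Ln n)"
    and intertw: "\<forall>n f. \<forall>xs\<in>V_n Lam n. Ln n (U_phi f) xs = U_phi (L f) xs"
begin

lemma Ln_cong:
  "(\<And>ys. ys \<in> V_n Lam n \<Longrightarrow> f ys = g ys) \<Longrightarrow> xs \<in> V_n Lam n \<Longrightarrow> Ln n f xs = Ln n g xs"
  by (rule markov_generator_on_cong[OF gen_n[rule_format]])

lemma Pi_op_commutator_cong:
  assumes "xs \<in> V_n Lam n" and "\<And>ys. ys \<in> V_n Lam (n - 1) \<Longrightarrow> g ys = h ys"
  shows "Ln n (Pi_op n g) xs = Ln n (Pi_op n h) xs"
    and "Pi_op n (Ln (n - 1) g) xs = Pi_op n (Ln (n - 1) h) xs"
proof -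
  show "Ln n (Pi_op n g) xs = Ln n (Pi_op n h) xs"
    using Pi_op_cong[OF Lam_down _ assms(2)] by (rule Ln_cong[OF _ assms(1)])
  show "Pi_op n (Ln (n - 1) g) xs = Pi_op n (Ln (n - 1) h) xs"
    using Ln_cong[OF assms(2)] by (rule Pi_op_cong[OF Lam_down assms(1)])
qed

lemma Ln_Pi_op_U_phi:
  assumes "xs \<in> V_n Lam n"
  shows "Ln n (Pi_op n (U_phi f)) xs = L (annih f) (phi xs)"
proof -
  have "Ln n (Pi_op n (U_phi f)) xs = Ln n (U_phi (annih f)) xs"
    using assms by (intro Ln_cong) (simp_all add: Pi_op_U_phi V_n_iff)
  also have "\<dots> = L (annih f) (phi xs)"
    using intertw assms by (simp add: U_phi_def)
  finally show ?thesis .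
qed

lemma Pi_op_Ln_U_phi:
  assumes "xs \<in> V_n Lam n"
  shows "Pi_op n (Ln (n - 1) (U_phi f)) xs = annih (L f) (phi xs)"
proof -
  have "Pi_op n (Ln (n - 1) (U_phi f)) xs = Pi_op n (U_phi (L f)) xs"
    using intertw by (intro Pi_op_cong[OF Lam_down assms]) blast
  also have "\<dots> = annih (L f) (phi xs)"
    using assms Pi_op_U_phi[of xs n "L f"] by (simp add: V_n_iff U_phi_def)
  finally show ?thesis .
qed

lemma Pi_op_commute_U_phi_iff:
  "xs \<in> V_n Lam n \<Longrightarrow>
     Ln n (Pi_op n (U_phi f)) xs = Pi_op n (Ln (n - 1) (U_phi f)) xs
     \<longleftrightarrow> L (annih f) (phi xs) = annih (L f) (phi xs)"
  by (simp only: Ln_Pi_op_U_phi Pi_op_Ln_U_phi)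

lemma Pi_op_0_commute: "xs \<in> V_n Lam 0 \<Longrightarrow> Ln 0 (Pi_op 0 g) xs = Pi_op 0 (Ln 0 g) xs"
  using markov_generator_on_zero[OF gen_n[rule_format]] by (simp add: Pi_op_def)

lemma annih_commute_if_Pi_op_commute:
  assumes Pi_op_commute: "\<forall>n\<ge>1. \<forall>g. perm_invariant_on (V_n Lam (n - 1)) g \<longrightarrow>
             (\<forall>xs\<in>V_n Lam n. Ln n (Pi_op n g) xs = Pi_op n (Ln (n - 1) g) xs)"
    and "\<eta> \<in> Omega Lam"
  shows "L (annih f) \<eta> = annih (L f) \<eta>"
proof -
  obtain n xs where xs: "xs \<in> V_n Lam n" and "phi xs = \<eta>"
    using \<open>\<eta> \<in> Omega Lam\<close> by (elim Omega_obtain_phi)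
  moreover have "Ln n (Pi_op n (U_phi f)) xs = Pi_op n (Ln (n - 1) (U_phi f)) xs"
  proof (cases "n = 0")
    case True
    then show ?thesis
      using Pi_op_0_commute xs by simp
  next
    case False
    then show ?thesis
      using Pi_op_commute[rule_format, OF _ perm_invariant_on_U_phi xs] by simp
  qed
  ultimately show ?thesis
    using Pi_op_commute_U_phi_iff by blast
qed

lemma Pi_op_commute_if_annih_commute:
  assumes "\<forall>f. \<forall>\<eta>\<in>Omega Lam. L (annih f) \<eta> = annih (L f) \<eta>"
    and inv: "perm_invariant_on (V_n Lam (n - 1)) g" and xs: "xs \<in> V_n Lam n"
  shows "Ln n (Pi_op n g) xs = Pi_op n (Ln (n - 1) g) xs"
proof -
  obtain f where f: "\<And>ys. ys \<in> V_n Lam (n - 1) \<Longrightarrow> g ys = U_phi f ys"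
    using perm_invariant_on_obtain_U_phi[OF inv] by blast
  have "Ln n (Pi_op n (U_phi f)) xs = Pi_op n (Ln (n - 1) (U_phi f)) xs"
    using assms(1) xs phi_in_Omega Pi_op_commute_U_phi_iff by blast
  then show ?thesis
    using Pi_op_commutator_cong[OF xs f] by simp
qed

end

theorem theorem2p7:
  fixes Lam :: "nat set"
    and Ln :: "nat \<Rightarrow> ('v::countable list \<Rightarrow> real) \<Rightarrow> ('v list \<Rightarrow> real)"
    and L :: "(('v \<Rightarrow> nat) \<Rightarrow> real) \<Rightarrow> (('v \<Rightarrow> nat) \<Rightarrow> real)"
  assumes Lam_down: "\<forall>k\<in>Lam. \<forall>j\<le>k. j \<in> Lam"
    and gen_n: "\<forall>n. markov_generator_on (V_n Lam n) (Ln n)"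
    and gen: "markov_generator_on (Omega Lam) L"
    and intertw: "\<forall>n f. \<forall>xs\<in>V_n Lam n. Ln n (U_phi f) xs = U_phi (L f) xs"
  shows "(\<forall>n\<ge>1. \<forall>g. perm_invariant_on (V_n Lam (n - 1)) g \<longrightarrow>
            (\<forall>xs\<in>V_n Lam n. Ln n (Pi_op n g) xs = Pi_op n (Ln (n - 1) g) xs))
         \<longleftrightarrow> (\<forall>f. \<forall>\<eta>\<in>Omega Lam. L (annih f) \<eta> = annih (L f) \<eta>)"
proof -
  interpret intertwined_generators Lam Ln L
    using Lam_down gen_n intertw by unfold_locales
  show ?thesis
    using annih_commute_if_Pi_op_commute Pi_op_commute_if_annih_commute by blast
qed

end
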